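(* Let $\mathcal{N}$ be a one-counter net. If Eve wins the one-token game $G_1$ on $\mathcal{N}$, then Eve has a winning strategy in the letter game on $\mathcal{N}$.
   Context: A one-counter net (OCN) is $\mathcal{N}=(Q,\Sigma,\Delta,q_0,F)$ with $Q$ finite, $\Sigma$ finite, $q_0\in Q$, $F\subseteq Q$, $\Delta\subseteq Q\times\Sigma\times\{-1,0,1\}\times Q$; configurations $(q,n)\in Q\times\mathbb{N}$, step $(q,n)\xrightarrow{a,d}(p,n+d)$ if $(q,a,d,p)\in\Delta$ and $n+d\ge0$; runs start at $(q_0,0)$ and are accepting if the last state is in $F$; $\mathcal{L}(\mathcal{N})$ is the set of words with an accepting run. Letter game: positions $(c,w)$, start $((q_0,0),\varepsilon)$; each round Adam picks $a\in\Sigma$, Eve picks a step $c\xrightarrow{a,d}c'$; if Eve has none and $wa$ is a prefix of a word of $\mathcal{L}(\mathcal{N})$ she loses; if $wa\in\mathcal{L}(\mathcal{N})$ but the state of $c'$ is not in $F$, Adam wins; otherwise continue from $(c',wa)$; Eve wins infinite plays. The game $G_1$ on $\mathcal{N}$: positions are pairs $(c^{E},c^{A})$ of configurations (Eve's token, Adam's token), starting at $((q_0,0),(q_0,0))$. Each round: Adam picks $a\in\Sigma$; Eve picks a step $c^E\xrightarrow{a,d}c^E_{+}$ for her token; Adam picks a step $c^A\xrightarrow{a,d'}c^A_{+}$ for his token. If Adam cannot move his token, he loses. If Eve cannot move her token while Adam can move his and extend his run to an accepting run, Eve loses. If both move and the state of $c^A_+$ is in $F$ but that of $c^E_+$ is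 not, Eve loses. Otherwise play continues from $(c^E_+,c^A_+)$; Eve wins infinite plays. *)

theory Defs
  imports Main
begin

text \<open>One-counter nets. Transitions carry a counter update d in {-1,0,1} (as an int);
configurations are pairs (state, counter value) with a natural-number counter.\<close>

record ('q, 'a) ocn =
  states :: "'q set"
  alph   :: "'a set"
  trans  :: "('q \<times> 'a \<times> int \<times> 'q) set"
  init   :: "'q"
  final  :: "'q set"

definition wf_ocn :: "('q, 'a) ocn \<Rightarrow> bool" where
  "wf_ocn N \<longleftrightarrow> finite (states N) \<and> finite (alph N) \<and> init N \<in> states N
     \<and> final N \<subseteq> states N
     \<and> trans N \<subseteq> states N \<times> alph N \<times> {-1, 0, 1} \<times> states N"

type_synonym 'q config = "'q \<times> nat"

definition step :: "('q, 'a) ocn \<Rightarrow> 'q config \<Rightarrow> 'a \<Rightarrow> 'q config \<Rightarrow> bool" where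
  "step N c a c' \<longleftrightarrow> (\<exists>d. (fst c, a, d, fst c') \<in> trans N \<and> int (snd c) + d \<ge> 0
                         \<and> int (snd c') = int (snd c) + d)"

inductive reach :: "('q, 'a) ocn \<Rightarrow> 'q config \<Rightarrow> 'a list \<Rightarrow> 'q config \<Rightarrow> bool"
  for N where
  reach_Nil: "reach N c [] c"
| reach_Cons: "step N c a c' \<Longrightarrow> reach N c' w c'' \<Longrightarrow> reach N c (a # w) c''"

definition init_config :: "('q, 'a) ocn \<Rightarrow> 'q config" where
  "init_config N = (init N, 0)"

definition lang :: "('q, 'a) ocn \<Rightarrow> 'a list set" where
  "lang N = {w. \<exists>c. reach N (init_config N) w c \<and> fst c \<in> final N}"

definition acc_ext :: "('q, 'a) ocn \<Rightarrow> 'q config \<Rightarrow> bool" where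
  "acc_ext N c \<longleftrightarrow> (\<exists>v c'. reach N c v c' \<and> fst c' \<in> final N)"

text \<open>A strategy for Eve in the letter game maps the word played so far (including
Adam's newest letter) to her new configuration; her own past moves are determined by
the letters and the strategy, so this is no loss of generality.\<close>

definition letter_cfg :: "('q, 'a) ocn \<Rightarrow> ('a list \<Rightarrow> 'q config) \<Rightarrow> 'a list \<Rightarrow> 'q config" where
  "letter_cfg N \<sigma> u = (if u = [] then init_config N else \<sigma> u)"

text \<open>Eve's strategy wins: along every sequence of Adam letters w which is still a
prefix of a word in the language, each of Eve's chosen moves is a legal step, and
whenever w is in the language, Eve's state is final.  (Once Adam leaves the set of
prefixes of the language, Eve can never lose.)\<close>

definition letter_winning :: "('q, 'a) ocn \<Rightarrow> ('a list \<Rightarrow> 'q config) \<Rightarrow> bool" where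
  "letter_winning N \<sigma> \<longleftrightarrow>
     (\<forall>w \<in> lists (alph N). (\<exists>v. w @ v \<in> lang N) \<longrightarrow>
        (\<forall>i < length w. step N (letter_cfg N \<sigma> (take i w)) (w ! i)
                              (letter_cfg N \<sigma> (take (Suc i) w)))
        \<and> (w \<in> lang N \<longrightarrow> fst (letter_cfg N \<sigma> w) \<in> final N))"

definition eve_wins_letter_game :: "('q, 'a) ocn \<Rightarrow> bool" where
  "eve_wins_letter_game N \<longleftrightarrow> (\<exists>\<sigma>. letter_winning N \<sigma>)"

text \<open>A strategy for Eve in G1 maps the letters a_1..a_k played so far (k >= 1, including
the newest letter) and Adam's token configurations c^A_0..c^A_(k-1) (before his k-th move)
to Eve's new configuration.\<close>

definition g1_eve_cfg :: "('q, 'a) ocn \<Rightarrow> ('a list \<Rightarrow> 'q config list \<Rightarrow> 'q config)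
     \<Rightarrow> 'a list \<Rightarrow> 'q config list \<Rightarrow> nat \<Rightarrow> 'q config" where
  "g1_eve_cfg N \<tau> w cs i = (if i = 0 then init_config N else \<tau> (take i w) (take i cs))"

text \<open>Eve's G1 strategy is winning: for every sequence of letters w and every legal
sequence cs of Adam-token configurations (a run on w from the initial configuration,
cs ! i being the configuration after i rounds), and every round i in which the play has
not ended before (Eve moved legally in all earlier rounds): if Eve's move is illegal
then Adam's new configuration cannot be extended to an accepting run; and if Eve moved
legally and Adam's new state is accepting, so is Eve's.\<close>

definition g1_winning :: "('q, 'a) ocn \<Rightarrow> ('a list \<Rightarrow> 'q config list \<Rightarrow> 'q config) \<Rightarrow> bool" where
  "g1_winning N \<tau> \<longleftrightarrow>
     (\<forall>w cs. w \<in> lists (alph N) \<and> length cs = Suc (length w) \<and> cs ! 0 = init_config N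
        \<and> (\<forall>i < length w. step N (cs ! i) (w ! i) (cs ! Suc i)) \<longrightarrow>
        (\<forall>i < length w.
           (\<forall>j < i. step N (g1_eve_cfg N \<tau> w cs j) (w ! j) (g1_eve_cfg N \<tau> w cs (Suc j))) \<longrightarrow>
             (\<not> step N (g1_eve_cfg N \<tau> w cs i) (w ! i) (g1_eve_cfg N \<tau> w cs (Suc i))
                  \<longrightarrow> \<not> acc_ext N (cs ! Suc i))
           \<and> (step N (g1_eve_cfg N \<tau> w cs i) (w ! i) (g1_eve_cfg N \<tau> w cs (Suc i))
                \<and> fst (cs ! Suc i) \<in> final N
                  \<longrightarrow> fst (g1_eve_cfg N \<tau> w cs (Suc i)) \<in> final N)))"

definition eve_wins_G1 :: "('q, 'a) ocn \<Rightarrow> bool" where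
  "eve_wins_G1 N \<longleftrightarrow> (\<exists>\<tau>. g1_winning N \<tau>)"

end

theory Submission
  imports Defs
begin

(*
  Write e \<sqsupseteq> x if Eve wins G1 from the position where her token is at e and Adam's at x.
  If Adam's token is dead, Eve wins trivially; if e \<sqsupseteq> x and x can still reach an accepting
  state, so can e; and \<sqsupseteq> is transitive, since against y Eve can play her e \<sqsupseteq> x strategy
  against the moves of her own x \<sqsupseteq> y strategy.  A winning G1 strategy gives init \<sqsupseteq> init.
  In the letter game Eve keeps a configuration e with e \<sqsupseteq> x for every x reachable on the
  word read so far.  In particular e \<sqsupseteq> e, so on the next letter she can move to an e' that
  dominates every successor of e; by transitivity e' dominates every successor of every x.
*)

declare split_paired_Ex [simp del] split_paired_All [simp del]

lemma reach_Nil_iff [simp]: "reach N c [] d \<longleftrightarrow> c = d"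
  by (auto elim: reach.cases intro: reach.intros)

lemma reach_Cons_iff [simp]: "reach N c (a # w) d \<longleftrightarrow> (\<exists>c'. step N c a c' \<and> reach N c' w d)"
  by (auto elim: reach.cases intro: reach.intros)

lemma reach_append_iff: "reach N c (u @ v) d \<longleftrightarrow> (\<exists>m. reach N c u m \<and> reach N m v d)"
  by (induction u arbitrary: c) auto

lemma reach_snoc_iff: "reach N c (u @ [a]) d \<longleftrightarrow> (\<exists>m. reach N c u m \<and> step N m a d)"
  by (simp add: reach_append_iff)

lemma step_in_alph: "wf_ocn N \<Longrightarrow> step N c a c' \<Longrightarrow> a \<in> alph N"
  unfolding wf_ocn_def step_def by blast

lemma acc_ext_if_final: "fst c \<in> final N \<Longrightarrow> acc_ext N c"
  unfolding acc_ext_def by (blast intro: reach_Nil)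

lemma acc_ext_step: "step N c a c' \<Longrightarrow> acc_ext N c' \<Longrightarrow> acc_ext N c"
  unfolding acc_ext_def by (blast intro: reach_Cons)

definition g1_round :: "('q, 'a) ocn \<Rightarrow> ('q config \<Rightarrow> 'q config \<Rightarrow> bool)
    \<Rightarrow> 'q config \<Rightarrow> 'q config \<Rightarrow> 'a \<Rightarrow> bool" where
  "g1_round N R e x a \<longleftrightarrow>
     (\<exists>e'. step N e a e' \<and> (\<forall>x'. step N x a x' \<longrightarrow> R e' x'))
     \<or> (\<forall>x'. step N x a x' \<longrightarrow> \<not> acc_ext N x')"

lemma g1_round_mono [mono]:
  "(\<And>e x. R e x \<longrightarrow> S e x) \<Longrightarrow> g1_round N R e x a \<longrightarrow> g1_round N S e x a"
  unfolding g1_round_def by blast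

text \<open>Acceptance is also required of the current
  position, not only after each round; for a position reached in a play this is the check made
  in the round that led to it.\<close>

coinductive g1_win_from :: "('q, 'a) ocn \<Rightarrow> 'q config \<Rightarrow> 'q config \<Rightarrow> bool" for N where
  "(fst x \<in> final N \<longrightarrow> fst e \<in> final N) \<Longrightarrow> (\<forall>a. g1_round N (g1_win_from N) e x a)
    \<Longrightarrow> g1_win_from N e x"

lemma g1_win_from_coinduct:
  assumes "X e x"
    and "\<And>e x. X e x \<Longrightarrow> (fst x \<in> final N \<longrightarrow> fst e \<in> final N) \<and> (\<forall>a. g1_round N X e x a)"
  shows "g1_win_from N e x"
  using assms(1)
proof (rule g1_win_from.coinduct)
  fix e x
  assume "X e x"
  have "g1_round N (\<lambda>e x. X e x \<or> g1_win_from N e x) e x a" for a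
  proof (rule g1_round_mono[THEN mp])
    show "g1_round N X e x a"
      using assms(2)[OF \<open>X e x\<close>] by blast
  qed simp
  then show "\<exists>x' e'. e = e' \<and> x = x' \<and> (fst x' \<in> final N \<longrightarrow> fst e' \<in> final N)
      \<and> (\<forall>a. g1_round N (\<lambda>e x. X e x \<or> g1_win_from N e x) e' x' a)"
    using assms(2)[OF \<open>X e x\<close>] by blast
qed

lemma g1_win_from_final: "g1_win_from N e x \<Longrightarrow> fst x \<in> final N \<Longrightarrow> fst e \<in> final N"
  by (blast elim: g1_win_from.cases)

lemma g1_win_from_round: "g1_win_from N e x \<Longrightarrow> g1_round N (g1_win_from N) e x a"
  by (blast elim: g1_win_from.cases)

lemma g1_win_from_dead: "\<not> acc_ext N x \<Longrightarrow> g1_win_from N e x"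
proof (rule g1_win_from_coinduct[of "\<lambda>e x. \<not> acc_ext N x"])
  fix e x
  assume "\<not> acc_ext N x"
  then show "(fst x \<in> final N \<longrightarrow> fst e \<in> final N) \<and> (\<forall>a. g1_round N (\<lambda>e x. \<not> acc_ext N x) e x a)"
    unfolding g1_round_def by (blast intro: acc_ext_if_final acc_ext_step)
qed

lemma g1_win_from_acc_ext:
  assumes "g1_win_from N e x" and "acc_ext N x"
  shows "acc_ext N e"
proof -
  from \<open>acc_ext N x\<close> obtain v c where "reach N x v c" "fst c \<in> final N"
    unfolding acc_ext_def by blast
  then show ?thesis
    using \<open>g1_win_from N e x\<close>
  proof (induction x v c arbitrary: e rule: reach.induct)
    case (reach_Nil x)
    then show ?case by (blast intro: acc_ext_if_final g1_win_from_final)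
  next
    case (reach_Cons x a y w c)
    have "acc_ext N y"
      using reach_Cons.hyps(2) reach_Cons.prems(1) unfolding acc_ext_def by blast
    then obtain e' where "step N e a e'" "g1_win_from N e' y"
      using g1_win_from_round[OF reach_Cons.prems(2), of a] reach_Cons.hyps(1)
      unfolding g1_round_def by blast
    have "acc_ext N e'"
      by (rule reach_Cons.IH) fact+
    with \<open>step N e a e'\<close> show ?case
      by (rule acc_ext_step)
  qed
qed

lemma g1_win_from_trans:
  assumes "g1_win_from N e x" and "g1_win_from N x y"
  shows "g1_win_from N e y"
proof (rule g1_win_from_coinduct[of "\<lambda>e y. \<exists>x. g1_win_from N e x \<and> g1_win_from N x y"])
  show "\<exists>x. g1_win_from N e x \<and> g1_win_from N x y"
    using assms by blast
next
  fix e y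
  assume "\<exists>x. g1_win_from N e x \<and> g1_win_from N x y"
  then obtain x where ex: "g1_win_from N e x" and xy: "g1_win_from N x y" by blast
  have "g1_round N (\<lambda>e y. \<exists>x. g1_win_from N e x \<and> g1_win_from N x y) e y a" for a
  proof (cases "\<forall>y'. step N y a y' \<longrightarrow> \<not> acc_ext N y'")
    case True
    then show ?thesis unfolding g1_round_def by blast
  next
    case False
    then obtain y' where y': "step N y a y'" "acc_ext N y'" by blast
    then obtain x' where "step N x a x'" and x'y: "\<forall>y''. step N y a y'' \<longrightarrow> g1_win_from N x' y''"
      using g1_win_from_round[OF xy, of a] unfolding g1_round_def by blast
    have "acc_ext N x'"
      using g1_win_from_acc_ext x'y y' by blast
    then obtain e' where "step N e a e'" "g1_win_from N e' x'"
      using g1_win_from_round[OF ex, of a] \<open>step N x a x'\<close> unfolding g1_round_def by blast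
    then show ?thesis
      using x'y unfolding g1_round_def by blast
  qed
  then show "(fst y \<in> final N \<longrightarrow> fst e \<in> final N)
      \<and> (\<forall>a. g1_round N (\<lambda>e y. \<exists>x. g1_win_from N e x \<and> g1_win_from N x y) e y a)"
    using ex xy g1_win_from_final by blast
qed

definition g1_adam_run :: "('q, 'a) ocn \<Rightarrow> 'a list \<Rightarrow> 'q config list \<Rightarrow> bool" where
  "g1_adam_run N w cs \<longleftrightarrow> w \<in> lists (alph N) \<and> length cs = Suc (length w)
     \<and> cs ! 0 = init_config N \<and> (\<forall>i < length w. step N (cs ! i) (w ! i) (cs ! Suc i))"

definition g1_eve_legal :: "('q, 'a) ocn \<Rightarrow> ('a list \<Rightarrow> 'q config list \<Rightarrow> 'q config)
    \<Rightarrow> 'a list \<Rightarrow> 'q config list \<Rightarrow> nat \<Rightarrow> bool" where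
  "g1_eve_legal N \<tau> w cs n \<longleftrightarrow>
     (\<forall>j < n. step N (g1_eve_cfg N \<tau> w cs j) (w ! j) (g1_eve_cfg N \<tau> w cs (Suc j)))"

definition g1_position :: "('q, 'a) ocn \<Rightarrow> ('a list \<Rightarrow> 'q config list \<Rightarrow> 'q config)
    \<Rightarrow> 'q config \<Rightarrow> 'q config \<Rightarrow> bool" where
  "g1_position N \<tau> e x \<longleftrightarrow> (\<exists>w cs. g1_adam_run N w cs \<and> g1_eve_legal N \<tau> w cs (length w)
     \<and> e = g1_eve_cfg N \<tau> w cs (length w) \<and> x = cs ! length w)"

lemma g1_position_init: "g1_position N \<tau> (init_config N) (init_config N)"
  unfolding g1_position_def g1_adam_run_def g1_eve_legal_def
  by (intro exI[of _ "[]"] exI[of _ "[init_config N]"]) (simp add: g1_eve_cfg_def)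

lemma g1_adam_run_snoc:
  assumes "g1_adam_run N w cs" and "a \<in> alph N" and "step N (cs ! length w) a x'"
  shows "g1_adam_run N (w @ [a]) (cs @ [x'])"
  using assms unfolding g1_adam_run_def by (auto simp: nth_append less_Suc_eq)

lemma g1_eve_cfg_snoc:
  assumes "length cs = Suc (length w)"
  shows "j \<le> length w \<Longrightarrow> g1_eve_cfg N \<tau> (w @ [a]) (cs @ [x']) j = g1_eve_cfg N \<tau> w cs j"
    and "g1_eve_cfg N \<tau> (w @ [a]) (cs @ [x']) (Suc (length w)) = \<tau> (w @ [a]) cs"
  using assms unfolding g1_eve_cfg_def by auto

lemma g1_eve_legal_snoc:
  assumes "length cs = Suc (length w)"
  shows "g1_eve_legal N \<tau> (w @ [a]) (cs @ [x']) (length w) \<longleftrightarrow> g1_eve_legal N \<tau> w cs (length w)"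
    and "g1_eve_legal N \<tau> (w @ [a]) (cs @ [x']) (Suc (length w)) \<longleftrightarrow>
      g1_eve_legal N \<tau> w cs (length w)
      \<and> step N (g1_eve_cfg N \<tau> w cs (length w)) a (\<tau> (w @ [a]) cs)"
  using assms unfolding g1_eve_legal_def
  by (auto simp: g1_eve_cfg_snoc nth_append less_Suc_eq)

lemma g1_winning_round:
  assumes "g1_winning N \<tau>" and "g1_adam_run N w cs" and "g1_eve_legal N \<tau> w cs (length w)"
    and "a \<in> alph N" and "step N (cs ! length w) a x'"
  defines "e \<equiv> g1_eve_cfg N \<tau> w cs (length w)" and "e' \<equiv> \<tau> (w @ [a]) cs"
  shows "step N e a e' \<and> (fst x' \<in> final N \<longrightarrow> fst e' \<in> final N) \<or> \<not> acc_ext N x'"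
proof -
  have len: "length cs = Suc (length w)"
    using assms(2) unfolding g1_adam_run_def by blast
  have "g1_adam_run N (w @ [a]) (cs @ [x'])"
    using assms(2,4,5) by (rule g1_adam_run_snoc)
  moreover have "g1_eve_legal N \<tau> (w @ [a]) (cs @ [x']) (length w)"
    using assms(3) g1_eve_legal_snoc(1)[OF len] by blast
  ultimately show ?thesis
    using assms(1) len unfolding g1_winning_def g1_adam_run_def g1_eve_legal_def e_def e'_def
    by (auto simp: g1_eve_cfg_snoc nth_append dest!: spec[of _ "w @ [a]"] spec[of _ "cs @ [x']"])
qed

lemma g1_position_snoc:
  assumes "g1_adam_run N w cs" and "g1_eve_legal N \<tau> w cs (length w)"
    and "a \<in> alph N" and "step N (cs ! length w) a x'"
    and "step N (g1_eve_cfg N \<tau> w cs (length w)) a (\<tau> (w @ [a]) cs)"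
  shows "g1_position N \<tau> (\<tau> (w @ [a]) cs) x'"
proof -
  have len: "length cs = Suc (length w)"
    using assms(1) unfolding g1_adam_run_def by blast
  show ?thesis
    unfolding g1_position_def
  proof (intro exI conjI)
    show "g1_adam_run N (w @ [a]) (cs @ [x'])"
      using assms(1,3,4) by (rule g1_adam_run_snoc)
    show "g1_eve_legal N \<tau> (w @ [a]) (cs @ [x']) (length (w @ [a]))"
      using g1_eve_legal_snoc(2)[OF len] assms(2,5) by simp
  qed (simp_all add: len g1_eve_cfg_snoc nth_append)
qed

lemma g1_win_from_g1_position:
  assumes wf: "wf_ocn N" and win: "g1_winning N \<tau>"
    and "g1_position N \<tau> e x" and "fst x \<in> final N \<longrightarrow> fst e \<in> final N"
  shows "g1_win_from N e x"
proof (rule g1_win_from_coinduct[of "\<lambda>e x. g1_position N \<tau> e x \<and> (fst x \<in> final N \<longrightarrow> fst e \<in> final N)"])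
  show "g1_position N \<tau> e x \<and> (fst x \<in> final N \<longrightarrow> fst e \<in> final N)"
    using assms(3,4) by blast
next
  fix e x
  assume pos: "g1_position N \<tau> e x \<and> (fst x \<in> final N \<longrightarrow> fst e \<in> final N)"
  then obtain w cs where run: "g1_adam_run N w cs" and legal: "g1_eve_legal N \<tau> w cs (length w)"
    and e: "e = g1_eve_cfg N \<tau> w cs (length w)" and x: "x = cs ! length w"
    unfolding g1_position_def by blast
  have "g1_round N (\<lambda>e x. g1_position N \<tau> e x \<and> (fst x \<in> final N \<longrightarrow> fst e \<in> final N)) e x a"
    for a
  proof -
    define e' where "e' = \<tau> (w @ [a]) cs"
    have round: "step N e a e' \<and> (fst x' \<in> final N \<longrightarrow> fst e' \<in> final N) \<or> \<not> acc_ext N x'"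
      and position: "step N e a e' \<Longrightarrow> g1_position N \<tau> e' x'"
      if "step N x a x'" for x'
      using g1_winning_round[OF win run legal] g1_position_snoc[OF run legal]
        step_in_alph[OF wf that] that unfolding e x e'_def by blast+
    show ?thesis
    proof (cases "step N e a e'")
      case True
      then show ?thesis
        using round position acc_ext_if_final unfolding g1_round_def by blast
    next
      case False
      then show ?thesis
        using round unfolding g1_round_def by blast
    qed
  qed
  then show "(fst x \<in> final N \<longrightarrow> fst e \<in> final N) \<and>
      (\<forall>a. g1_round N (\<lambda>e x. g1_position N \<tau> e x \<and> (fst x \<in> final N \<longrightarrow> fst e \<in> final N)) e x a)"
    using pos by blast
qed

lemma g1_win_from_live_step:
  assumes "g1_win_from N e x" and "step N x a y" and "acc_ext N y"
  obtains e' where "step N e a e'" and "acc_ext N e'"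
  using g1_win_from_round[OF assms(1), of a] assms(2,3) g1_win_from_acc_ext
  unfolding g1_round_def by blast

lemma g1_win_from_dominating_step:
  assumes "g1_win_from N e x" and "step N x a y"
    and dom: "\<And>e'. step N e a e' \<Longrightarrow> g1_win_from N e'' e'"
  shows "g1_win_from N e'' y"
proof (cases "acc_ext N y")
  case True
  then obtain e' where "step N e a e'" "g1_win_from N e' y"
    using g1_win_from_round[OF assms(1), of a] assms(2) unfolding g1_round_def by blast
  then show ?thesis
    using dom g1_win_from_trans by blast
next
  case False
  then show ?thesis by (rule g1_win_from_dead)
qed

text \<open>Eve's letter-game move; it is an arbitrary configuration unless \<open>best_move_spec\<close> applies.\<close>

definition best_move :: "('q, 'a) ocn \<Rightarrow> 'q config \<Rightarrow> 'a \<Rightarrow> 'q config" where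
  "best_move N e a = (SOME e'. step N e a e' \<and> (\<forall>y. step N e a y \<longrightarrow> g1_win_from N e' y))"

lemma best_move_spec:
  assumes "g1_win_from N e e" and "step N e a y" and "acc_ext N y"
  shows "step N e a (best_move N e a)"
    and "step N e a y' \<Longrightarrow> g1_win_from N (best_move N e a) y'"
proof -
  have "\<exists>e'. step N e a e' \<and> (\<forall>y. step N e a y \<longrightarrow> g1_win_from N e' y)"
    using g1_win_from_round[OF assms(1), of a] assms(2,3) unfolding g1_round_def by blast
  then have "step N e a (best_move N e a) \<and> (\<forall>y. step N e a y \<longrightarrow> g1_win_from N (best_move N e a) y)"
    unfolding best_move_def by (rule someI_ex)
  then show "step N e a (best_move N e a)" and "step N e a y' \<Longrightarrow> g1_win_from N (best_move N e a) y'"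
    by blast+
qed

lemma best_move_wins_g1:
  assumes reach_e: "reach N c u e" and win_e: "\<And>x. reach N c u x \<Longrightarrow> g1_win_from N e x"
    and "reach N c u x" and "step N x a y" and "acc_ext N y"
  shows "step N e a (best_move N e a)"
    and "reach N c (u @ [a]) x' \<Longrightarrow> g1_win_from N (best_move N e a) x'"
proof -
  obtain y' where "step N e a y'" "acc_ext N y'"
    using g1_win_from_live_step[OF win_e] assms(3-5) by blast
  note best = best_move_spec[OF win_e[OF reach_e] this]
  show "step N e a (best_move N e a)"
    by (rule best(1))
  assume "reach N c (u @ [a]) x'"
  then obtain z where "reach N c u z" "step N z a x'"
    by (auto simp: reach_snoc_iff)
  then show "g1_win_from N (best_move N e a) x'"
    using best(2) by (blast intro: g1_win_from_dominating_step[OF win_e])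
qed

definition letter_strategy :: "('q, 'a) ocn \<Rightarrow> 'a list \<Rightarrow> 'q config" where
  "letter_strategy N = foldl (best_move N) (init_config N)"

lemma lang_live_prefix:
  assumes "u @ a # v \<in> lang N"
  obtains x y where "reach N (init_config N) u x" and "step N x a y" and "acc_ext N y"
proof -
  from assms obtain c where "reach N (init_config N) (u @ a # v) c" "fst c \<in> final N"
    unfolding lang_def by blast
  then show thesis
    using that unfolding reach_append_iff reach_Cons_iff acc_ext_def by blast
qed

lemma letter_strategy_wins_g1:
  assumes init: "g1_win_from N (init_config N) (init_config N)" and "u @ v \<in> lang N"
  shows "reach N (init_config N) u (letter_strategy N u)
    \<and> (\<forall>x. reach N (init_config N) u x \<longrightarrow> g1_win_from N (letter_strategy N u) x)"
  using assms(2)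
proof (induction u arbitrary: v rule: rev_induct)
  case Nil
  then show ?case using init by (simp add: letter_strategy_def)
next
  case (snoc a u)
  from snoc.prems have lang: "u @ a # v \<in> lang N" by simp
  then obtain x y where live: "reach N (init_config N) u x" "step N x a y" "acc_ext N y"
    by (rule lang_live_prefix)
  have reach_e: "reach N (init_config N) u (letter_strategy N u)"
    and win_e: "\<And>x. reach N (init_config N) u x \<Longrightarrow> g1_win_from N (letter_strategy N u) x"
    using snoc.IH[OF lang] by blast+
  have "letter_strategy N (u @ [a]) = best_move N (letter_strategy N u) a"
    by (simp add: letter_strategy_def)
  then show ?case
    using reach_e best_move_wins_g1[OF reach_e win_e live] unfolding reach_snoc_iff by auto
qed

lemma letter_strategy_winning:
  assumes init: "g1_win_from N (init_config N) (init_config N)"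
  shows "letter_winning N (letter_strategy N)"
proof -
  have cfg: "letter_cfg N (letter_strategy N) u = letter_strategy N u" for u
    by (simp add: letter_cfg_def letter_strategy_def)
  show ?thesis
    unfolding letter_winning_def cfg
  proof (intro ballI impI conjI allI)
    fix w i
    assume "\<exists>v. w @ v \<in> lang N" and "i < length w"
    then obtain v where lang: "take i w @ w ! i # (drop (Suc i) w @ v) \<in> lang N"
      by (metis append_Cons append_assoc id_take_nth_drop)
    then obtain x y where "reach N (init_config N) (take i w) x" "step N x (w ! i) y" "acc_ext N y"
      by (rule lang_live_prefix)
    moreover have "letter_strategy N (take (Suc i) w) = best_move N (letter_strategy N (take i w)) (w ! i)"
      using \<open>i < length w\<close> by (simp add: take_Suc_conv_app_nth letter_strategy_def)
    ultimately show "step N (letter_strategy N (take i w)) (w ! i) (letter_strategy N (take (Suc i) w))"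
      using letter_strategy_wins_g1[OF init lang] best_move_wins_g1(1) by metis
  next
    fix w
    assume "w \<in> lang N"
    then obtain x where "reach N (init_config N) w x" "fst x \<in> final N"
      unfolding lang_def by blast
    moreover have "w @ [] \<in> lang N" using \<open>w \<in> lang N\<close> by simp
    ultimately show "fst (letter_strategy N w) \<in> final N"
      using letter_strategy_wins_g1[OF init] g1_win_from_final by blast
  qed
qed

theorem lemma1:
  fixes N :: "('q, 'a) ocn"
  assumes "wf_ocn N"
    and "eve_wins_G1 N"
  shows "eve_wins_letter_game N"
proof -
  from assms(2) obtain \<tau> where "g1_winning N \<tau>"
    unfolding eve_wins_G1_def by blast
  then have "g1_win_from N (init_config N) (init_config N)"
    using g1_win_from_g1_position[OF assms(1)] g1_position_init by blast
  then show ?thesis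
    unfolding eve_wins_letter_game_def using letter_strategy_winning by blast
qed

end
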